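(* Let $(X,d)$ be a complete metric space, $\Lambda$ a finite set, $\mathcal{F}=\{X; f_{\lambda}\mid\lambda\in\Lambda\}$ an iterated function system, and $k\ge2$ an integer. Let $\mathcal{F}^k=\{X; f_{\lambda_{k-1}}\circ\cdots\circ f_{\lambda_0}\mid \lambda_0,\dots,\lambda_{k-1}\in\Lambda\}$ be the iterated function system consisting of all compositions of $k$ maps of $\mathcal{F}$ (indexed by $\Pi=\Lambda^k$). If $\mathcal{F}$ has the average shadowing property on $\mathbb{Z}_+$, then so does $\mathcal{F}^k$.
   Context: An iterated function system (IFS) $\mathcal{G}=\{X; g_{\mu}\mid\mu\in M\}$ on a metric space $(X,d)$ is a family of continuous maps $g_\mu:X\to X$ indexed by a finite nonempty set $M$. For $\sigma=(\mu_0,\mu_1,\dots)\in M^{\mathbb{Z}_+}$ write $\mathcal{G}_{\sigma_n}=g_{\mu_{n-1}}\circ\cdots\circ g_{\mu_0}$ for $n\ge1$ and $\mathcal{G}_{\sigma_0}=\mathrm{id}_X$. For $\delta>0$, a sequence $(x_i)_{i\ge0}$ in $X$ is a $\delta$-average pseudo-orbit of $\mathcal{G}$ if there exist a natural number $N$ and $\sigma=(\mu_0,\mu_1,\dots)\in M^{\mathbb{Z}_+}$ such that for all $n\ge N$, $\frac1n\sum_{i=0}^{n-1}d(g_{\mu_i}(x_i),x_{i+1})<\delta$. A sequence $(x_i)_{i\ge0}$ is $\epsilon$-shadowed in average by $z\in X$ if there exists $\sigma\in M^{\mathbb{Z}_+}$ with $\limsup_{n\to\infty}\frac1n\sum_{i=0}^{n-1}d(\mathcal{G}_{\sigma_i}(z),x_i)<\epsilon$.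 $\mathcal{G}$ has the average shadowing property (on $\mathbb{Z}_+$) if for every $\epsilon>0$ there is $\delta>0$ such that every $\delta$-average pseudo-orbit of $\mathcal{G}$ is $\epsilon$-shadowed in average by some point of $X$. *)

theory Defs
  imports "HOL-Analysis.Analysis" "HOL-Library.Liminf_Limsup"
begin

definition ifs :: "'m set \<Rightarrow> ('m \<Rightarrow> 'a::metric_space \<Rightarrow> 'a) \<Rightarrow> bool" where
  "ifs M g \<longleftrightarrow> finite M \<and> M \<noteq> {} \<and> (\<forall>\<mu>\<in>M. continuous_on UNIV (g \<mu>))"

fun comp_seq :: "('m \<Rightarrow> 'a \<Rightarrow> 'a) \<Rightarrow> (nat \<Rightarrow> 'm) \<Rightarrow> nat \<Rightarrow> 'a \<Rightarrow> 'a" where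
  "comp_seq g \<sigma> 0 = id"
| "comp_seq g \<sigma> (Suc n) = g (\<sigma> n) \<circ> comp_seq g \<sigma> n"

definition avg_pseudo_orbit ::
  "'m set \<Rightarrow> ('m \<Rightarrow> 'a::metric_space \<Rightarrow> 'a) \<Rightarrow> real \<Rightarrow> (nat \<Rightarrow> 'a) \<Rightarrow> bool" where
  "avg_pseudo_orbit M g \<delta> x \<longleftrightarrow>
     (\<exists>N::nat. \<exists>\<sigma>. (\<forall>i. \<sigma> i \<in> M) \<and>
        (\<forall>n\<ge>N. (1 / real n) * (\<Sum>i<n. dist (g (\<sigma> i) (x i)) (x (Suc i))) < \<delta>))"

definition avg_shadowed ::
  "'m set \<Rightarrow> ('m \<Rightarrow> 'a::metric_space \<Rightarrow> 'a) \<Rightarrow> real \<Rightarrow> (nat \<Rightarrow> 'a) \<Rightarrow> 'a \<Rightarrow> bool" where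
  "avg_shadowed M g \<epsilon> x z \<longleftrightarrow>
     (\<exists>\<sigma>. (\<forall>i. \<sigma> i \<in> M) \<and>
        limsup (\<lambda>n. ereal ((1 / real n) * (\<Sum>i<n. dist (comp_seq g \<sigma> i z) (x i)))) < ereal \<epsilon>)"

definition avg_shadowing :: "'m set \<Rightarrow> ('m \<Rightarrow> 'a::metric_space \<Rightarrow> 'a) \<Rightarrow> bool" where
  "avg_shadowing M g \<longleftrightarrow>
     (\<forall>\<epsilon>>0. \<exists>\<delta>>0. \<forall>x. avg_pseudo_orbit M g \<delta> x \<longrightarrow> (\<exists>z. avg_shadowed M g \<epsilon> x z))"

text \<open>The k-fold IFS: indices are words [l0,...,l(k-1)] over Lambda, map f l(k-1) o ... o f l0.\<close>
definition words :: "'m set \<Rightarrow> nat \<Rightarrow> 'm list set" where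
  "words L k = {ls. length ls = k \<and> set ls \<subseteq> L}"

definition word_map :: "('m \<Rightarrow> 'a \<Rightarrow> 'a) \<Rightarrow> 'm list \<Rightarrow> 'a \<Rightarrow> 'a" where
  "word_map f ls = fold (\<lambda>l h. f l \<circ> h) ls id"

end

theory Submission
  imports Defs
begin

text \<open>
  A \<delta>-average pseudo-orbit (y j) of the k-fold system, driven by words w j, is refined into a
  sequence of the original system by inserting the k - 1 intermediate points of each word:
  inside a block the refined sequence is an exact orbit, so the total error up to time n equals
  the error of (y j) up to time n div k, and the refined sequence is again a \<delta>-average
  pseudo-orbit. A point z that (\<epsilon>/k)-shadows the refinement along \<sigma> shadows (y j) along the
  blocks of length k of \<sigma>: sampling every k-th term of a nonnegative sequence multiplies its
  Cesaro means by at most k.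
\<close>

definition cesaro_mean :: "(nat \<Rightarrow> real) \<Rightarrow> nat \<Rightarrow> real" where
  "cesaro_mean a n = 1 / real n * (\<Sum>i<n. a i)"

lemma sum_div_le_cesaro_mean:
  assumes "\<And>i. a i \<ge> 0" and "m \<le> n"
  shows "1 / real n * (\<Sum>i<m. a i) \<le> cesaro_mean a m"
proof (cases "m = 0")
  case False
  then show ?thesis
    unfolding cesaro_mean_def using assms
    by (intro mult_right_mono) (auto simp: frac_le sum_nonneg)
qed (simp add: cesaro_mean_def)

lemma cesaro_mean_subsample_le:
  assumes "\<And>i. a i \<ge> 0" and "k > 0"
  shows "cesaro_mean (\<lambda>j. a (k * j)) m \<le> real k * cesaro_mean a (k * m)"
proof (cases "m = 0")
  case False
  have "(\<Sum>j<m. a (k * j)) = (\<Sum>i\<in>(*) k ` {..<m}. a i)"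
    using assms(2) by (simp add: sum.reindex inj_on_def)
  also have "\<dots> \<le> (\<Sum>i<k * m. a i)"
    using assms by (intro sum_mono2) auto
  finally have "cesaro_mean (\<lambda>j. a (k * j)) m \<le> 1 / real m * (\<Sum>i<k * m. a i)"
    unfolding cesaro_mean_def by (intro mult_left_mono) auto
  also have "\<dots> = real k * cesaro_mean a (k * m)"
    using assms(2) False by (simp add: cesaro_mean_def)
  finally show ?thesis .
qed (simp add: cesaro_mean_def)

lemma limsup_cesaro_mean_subsample_less:
  assumes "\<And>i. a i \<ge> 0" and "k > 0"
    and "limsup (\<lambda>n. ereal (cesaro_mean a n)) < ereal c"
  shows "limsup (\<lambda>m. ereal (cesaro_mean (\<lambda>j. a (k * j)) m)) < ereal (real k * c)"
proof -
  obtain c' where c': "limsup (\<lambda>n. ereal (cesaro_mean a n)) < ereal c'" and "c' < c"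
    using ereal_dense2[OF assms(3)] by auto
  from c' have "eventually (\<lambda>n. ereal (cesaro_mean a n) < ereal c') sequentially"
    by (rule Limsup_lessD)
  then obtain N where N: "\<And>n. n \<ge> N \<Longrightarrow> cesaro_mean a n < c'"
    unfolding eventually_sequentially by auto
  have "eventually (\<lambda>m. ereal (cesaro_mean (\<lambda>j. a (k * j)) m) \<le> ereal (real k * c')) sequentially"
    unfolding eventually_sequentially
  proof (intro exI allI impI)
    fix m assume "m \<ge> N"
    moreover have "m \<le> k * m"
      using assms(2) by simp
    ultimately have "cesaro_mean a (k * m) < c'"
      by (intro N) linarith
    then have "real k * cesaro_mean a (k * m) \<le> real k * c'"
      using assms(2) by simp
    with cesaro_mean_subsample_le[where a = a and k = k and m = m, OF assms(1,2)]
    show "ereal (cesaro_mean (\<lambda>j. a (k * j)) m) \<le> ereal (real k * c')"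
      by simp
  qed
  then have "limsup (\<lambda>m. ereal (cesaro_mean (\<lambda>j. a (k * j)) m)) \<le> ereal (real k * c')"
    by (rule Limsup_bounded)
  also have "\<dots> < ereal (real k * c)"
    using \<open>c' < c\<close> assms(2) by simp
  finally show ?thesis .
qed

lemma word_map_Nil [simp]: "word_map f [] = id"
  by (simp add: word_map_def)

lemma word_map_snoc: "word_map f (xs @ [a]) = f a \<circ> word_map f xs"
  by (simp add: word_map_def)

lemma comp_seq_add:
  "comp_seq f \<sigma> (m + r) = word_map f (map (\<lambda>t. \<sigma> (m + t)) [0..<r]) \<circ> comp_seq f \<sigma> m"
  by (induction r) (auto simp: word_map_snoc)

definition block_word :: "nat \<Rightarrow> (nat \<Rightarrow> 'm) \<Rightarrow> nat \<Rightarrow> 'm list" where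
  "block_word k \<sigma> j = map (\<lambda>t. \<sigma> (k * j + t)) [0..<k]"

lemma block_word_in_words: "(\<And>i. \<sigma> i \<in> L) \<Longrightarrow> block_word k \<sigma> j \<in> words L k"
  by (auto simp: block_word_def words_def)

lemma comp_seq_block_word: "comp_seq (word_map f) (block_word k \<sigma>) j = comp_seq f \<sigma> (k * j)"
proof (induction j)
  case (Suc j)
  have "comp_seq f \<sigma> (k * Suc j) = comp_seq f \<sigma> (k * j + k)"
    by (simp add: add.commute)
  then show ?case
    using Suc by (simp add: comp_seq_add block_word_def)
qed simp

definition refine_word :: "nat \<Rightarrow> (nat \<Rightarrow> 'm list) \<Rightarrow> nat \<Rightarrow> 'm" where
  "refine_word k w i = w (i div k) ! (i mod k)"

definition refine_orbit ::
  "('m \<Rightarrow> 'a \<Rightarrow> 'a) \<Rightarrow> nat \<Rightarrow> (nat \<Rightarrow> 'm list) \<Rightarrow> (nat \<Rightarrow> 'a) \<Rightarrow> nat \<Rightarrow> 'a" where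
  "refine_orbit f k w y i = word_map f (take (i mod k) (w (i div k))) (y (i div k))"

lemma refine_word_in: "(\<And>j. w j \<in> words L k) \<Longrightarrow> k > 0 \<Longrightarrow> refine_word k w i \<in> L"
  unfolding refine_word_def words_def
  by (metis (mono_tags) mem_Collect_eq mod_less_divisor nth_mem subsetD)

lemma refine_orbit_within_block:
  "r < k \<Longrightarrow> refine_orbit f k w y (k * q + r) = word_map f (take r (w q)) (y q)"
  by (simp add: refine_orbit_def)

lemma refine_orbit_block_start: "k > 0 \<Longrightarrow> refine_orbit f k w y (k * j) = y j"
  using refine_orbit_within_block[of 0 k f w y j] by simp

lemma refine_orbit_step:
  assumes "length (w q) = k" and "r < k"
  shows "f (refine_word k w (k * q + r)) (refine_orbit f k w y (k * q + r))
    = word_map f (take (Suc r) (w q)) (y q)"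
  using assms by (simp add: refine_word_def refine_orbit_def take_Suc_conv_app_nth word_map_snoc)

lemma refine_step_error:
  assumes "length (w q) = k" and "r < k"
  shows "dist (f (refine_word k w (k * q + r)) (refine_orbit f k w y (k * q + r)))
      (refine_orbit f k w y (Suc (k * q + r)))
    = (if Suc r = k then dist (word_map f (w q) (y q)) (y (Suc q)) else 0)"
proof (cases "Suc r = k")
  case True
  then have "Suc (k * q + r) = k * Suc q"
    by simp
  then have "refine_orbit f k w y (Suc (k * q + r)) = y (Suc q)"
    using assms(2) by (simp only: refine_orbit_block_start)
  then show ?thesis
    using True assms by (simp add: refine_orbit_step)
next
  case False
  then have "Suc r < k"
    using assms(2) by simp
  then show ?thesis
    using False assms refine_orbit_within_block[of "Suc r" k f w y q]
    by (simp add: refine_orbit_step)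
qed

lemma Suc_div_within_block:
  assumes "r < k"
  shows "Suc (k * q + r) div k = (if Suc r = k then Suc q else q)"
proof (cases "Suc r = k")
  case True
  then have "Suc (k * q + r) = k * Suc q"
    by simp
  moreover have "k * Suc q div k = Suc q"
    using assms by simp
  ultimately show ?thesis
    unfolding if_P[OF True] by metis
next
  case False
  have "(k * q + r') div k = q" if "r' < k" for r'
    using that by auto
  from this[of "Suc r"] show ?thesis
    using False assms by simp
qed

lemma refine_error_sum:
  assumes "\<And>j. length (w j) = k" and "k > 0"
  shows "(\<Sum>i<n. dist (f (refine_word k w i) (refine_orbit f k w y i)) (refine_orbit f k w y (Suc i)))
    = (\<Sum>j<n div k. dist (word_map f (w j) (y j)) (y (Suc j)))"
proof (induction n)
  case (Suc n)
  define E where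
    "E i = dist (f (refine_word k w i) (refine_orbit f k w y i)) (refine_orbit f k w y (Suc i))"
    for i
  define e where "e j = dist (word_map f (w j) (y j)) (y (Suc j))" for j
  define q r where "q = n div k" and "r = n mod k"
  have n: "n = k * q + r" and "r < k"
    using assms(2) by (auto simp: q_def r_def)
  have "(\<Sum>i<Suc n. E i) = (\<Sum>j<q. e j) + (if Suc r = k then e q else 0)"
    using Suc.IH refine_step_error[where w = w and k = k and q = q and r = r and f = f and y = y,
        OF assms(1) \<open>r < k\<close>]
    by (simp add: E_def e_def q_def[symmetric] n[symmetric])
  also have "\<dots> = (\<Sum>j<Suc n div k. e j)"
    using Suc_div_within_block[OF \<open>r < k\<close>, of q] by (simp add: n)
  finally show ?case
    by (simp add: E_def e_def)
qed simp

lemma avg_pseudo_orbit_refine: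
  assumes "avg_pseudo_orbit (words L k) (word_map f) \<delta> y" and "k > 0"
  shows "\<exists>x. avg_pseudo_orbit L f \<delta> x \<and> (\<forall>j. x (k * j) = y j)"
proof -
  obtain N w where w: "\<And>j. w j \<in> words L k"
    and N: "\<And>m. m \<ge> N \<Longrightarrow> cesaro_mean (\<lambda>j. dist (word_map f (w j) (y j)) (y (Suc j))) m < \<delta>"
    using assms(1) unfolding avg_pseudo_orbit_def cesaro_mean_def by blast
  have len: "length (w j) = k" for j
    using w by (simp add: words_def)
  have "avg_pseudo_orbit L f \<delta> (refine_orbit f k w y)"
    unfolding avg_pseudo_orbit_def
  proof (intro exI[of _ "k * N"] exI[of _ "refine_word k w"] conjI allI impI)
    show "refine_word k w i \<in> L" for i
      using refine_word_in[OF w assms(2)] .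
    fix n assume "k * N \<le> n"
    then have "N \<le> n div k"
      using assms(2) by (simp add: less_eq_div_iff_mult_less_eq mult.commute)
    have "1 / real n * (\<Sum>i<n. dist (f (refine_word k w i) (refine_orbit f k w y i))
        (refine_orbit f k w y (Suc i)))
      = 1 / real n * (\<Sum>j<n div k. dist (word_map f (w j) (y j)) (y (Suc j)))"
      using refine_error_sum[where w = w and k = k and f = f and y = y and n = n, OF len assms(2)]
      by simp
    also have "\<dots> \<le> cesaro_mean (\<lambda>j. dist (word_map f (w j) (y j)) (y (Suc j))) (n div k)"
      by (rule sum_div_le_cesaro_mean) auto
    also have "\<dots> < \<delta>"
      using N \<open>N \<le> n div k\<close> .
    finally show "1 / real n * (\<Sum>i<n. dist (f (refine_word k w i) (refine_orbit f k w y i))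
        (refine_orbit f k w y (Suc i))) < \<delta>" .
  qed
  then show ?thesis
    using refine_orbit_block_start[OF assms(2)] by blast
qed

lemma avg_shadowed_blocks:
  assumes "avg_shadowed L f (\<epsilon> / real k) x z" and "\<And>j. x (k * j) = y j" and "k > 0"
  shows "avg_shadowed (words L k) (word_map f) \<epsilon> y z"
proof -
  obtain \<sigma> where \<sigma>: "\<And>i. \<sigma> i \<in> L"
    and ls: "limsup (\<lambda>n. ereal (cesaro_mean (\<lambda>i. dist (comp_seq f \<sigma> i z) (x i)) n))
      < ereal (\<epsilon> / real k)"
    using assms(1) unfolding avg_shadowed_def cesaro_mean_def by blast
  have "(\<lambda>j. dist (comp_seq (word_map f) (block_word k \<sigma>) j z) (y j))
      = (\<lambda>j. dist (comp_seq f \<sigma> (k * j) z) (x (k * j)))"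
    by (simp add: comp_seq_block_word assms(2))
  moreover have "real k * (\<epsilon> / real k) = \<epsilon>"
    using assms(3) by simp
  ultimately have "limsup (\<lambda>m. ereal (cesaro_mean
      (\<lambda>j. dist (comp_seq (word_map f) (block_word k \<sigma>) j z) (y j)) m)) < ereal \<epsilon>"
    using limsup_cesaro_mean_subsample_less[OF _ assms(3) ls] by simp
  then show ?thesis
    unfolding avg_shadowed_def cesaro_mean_def
    using block_word_in_words[OF \<sigma>] by (intro exI[of _ "block_word k \<sigma>"] conjI allI)
qed

lemma avg_shadowing_words:
  assumes "avg_shadowing L f" and "k > 0"
  shows "avg_shadowing (words L k) (word_map f)"
  unfolding avg_shadowing_def
proof (intro allI impI)
  fix \<epsilon> :: real assume "\<epsilon> > 0"
  then obtain \<delta> where "\<delta> > 0"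
    and sh: "\<And>x. avg_pseudo_orbit L f \<delta> x \<Longrightarrow> \<exists>z. avg_shadowed L f (\<epsilon> / real k) x z"
    using assms unfolding avg_shadowing_def by (meson divide_pos_pos of_nat_0_less_iff)
  have "\<exists>z. avg_shadowed (words L k) (word_map f) \<epsilon> y z"
    if y: "avg_pseudo_orbit (words L k) (word_map f) \<delta> y" for y
  proof -
    obtain x where "avg_pseudo_orbit L f \<delta> x" and x: "\<And>j. x (k * j) = y j"
      using avg_pseudo_orbit_refine[OF y assms(2)] by blast
    then obtain z where "avg_shadowed L f (\<epsilon> / real k) x z"
      using sh by blast
    then show ?thesis
      using avg_shadowed_blocks x assms(2) by blast
  qed
  then show "\<exists>\<delta>>0. \<forall>y. avg_pseudo_orbit (words L k) (word_map f) \<delta> y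
      \<longrightarrow> (\<exists>z. avg_shadowed (words L k) (word_map f) \<epsilon> y z)"
    using \<open>\<delta> > 0\<close> by blast
qed

theorem mainTheorem3:
  fixes L :: "'m set" and f :: "'m \<Rightarrow> 'a::complete_space \<Rightarrow> 'a" and k :: nat
  assumes "ifs L f" and "k \<ge> 2" and "avg_shadowing L f"
  shows "avg_shadowing (words L k) (word_map f)"
  using avg_shadowing_words[OF assms(3)] assms(2) by simp

end
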